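(* Let $d\geq 1$ and $c\geq 0$ be integers. Let $R_{d,c}$ be the set of all two-dimensional decompositions with parameters $b=2$, $d$, $c$ (of any integer $w\in\{0,\dots,2dc\}$), i.e. the set of all $2\times d$ matrices with entries in $\{0,\dots,c\}$ weakly decreasing along rows and down columns. Let $FBT_{d,c+1}$ be the set of finite full binary trees with exactly $c+1$ left fathers (the root included) and exactly $d$ right fathers. Then there is a bijection between $R_{d,c}$ and $FBT_{d,c+1}$.
   Context: Two-dimensional decomposition: given integers $d\geq1$, $b\geq 1$, $c\geq 0$, $w\geq 0$, a two-dimensional decomposition of $w$ with parameters $d,b,c$ is a $b\times d$ matrix $(a_{i,j})$ with all $a_{i,j}\in\{0,\dots,c\}$, weakly decreasing along each row and down each column, with $\sum a_{i,j}=w$. A full binary tree is a finite rooted planar tree in which every vertex has either no children or exactly two children (a left child and a right child). The root is regarded as a left vertex; left children are left vertices and right children are right vertices. A father is a vertex with two children; left (resp. right) fathers are fathers that are left (resp. right) vertices. *)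

theory Defs
  imports Main
begin

text \<open>Two-dimensional decompositions with parameters d, b, c: b x d matrices,
represented as functions on row index i < b and column index j < d
(0-based), extensional (value 0 outside the index range).\<close>

definition two_dim_decomp :: "nat \<Rightarrow> nat \<Rightarrow> nat \<Rightarrow> nat \<Rightarrow> (nat \<Rightarrow> nat \<Rightarrow> nat) \<Rightarrow> bool" where
  "two_dim_decomp d b c w a \<longleftrightarrow>
     (\<forall>i j. \<not> (i < b \<and> j < d) \<longrightarrow> a i j = 0) \<and>
     (\<forall>i<b. \<forall>j<d. a i j \<le> c) \<and>
     (\<forall>i<b. \<forall>j. Suc j < d \<longrightarrow> a i (Suc j) \<le> a i j) \<and>
     (\<forall>i j. Suc i < b \<longrightarrow> j < d \<longrightarrow> a (Suc i) j \<le> a i j) \<and>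
     (\<Sum>i<b. \<Sum>j<d. a i j) = w"

definition R :: "nat \<Rightarrow> nat \<Rightarrow> (nat \<Rightarrow> nat \<Rightarrow> nat) set" where
  "R d c = {a. \<exists>w. two_dim_decomp d 2 c w a}"

datatype fbt = Leaf | Node fbt fbt

text \<open>Number of left fathers / right fathers in a subtree, given whether its root
is a left vertex (True) or a right vertex (False).\<close>
fun left_fathers :: "bool \<Rightarrow> fbt \<Rightarrow> nat" where
  "left_fathers _ Leaf = 0"
| "left_fathers is_left (Node l r) = (if is_left then 1 else 0) + left_fathers True l + left_fathers False r"

fun right_fathers :: "bool \<Rightarrow> fbt \<Rightarrow> nat" where
  "right_fathers _ Leaf = 0"
| "right_fathers is_left (Node l r) = (if is_left then 0 else 1) + right_fathers True l + right_fathers False r"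

text \<open>FBT_{d,k}: full binary trees (root regarded as a left vertex) with exactly
k left fathers and exactly d right fathers.\<close>
definition FBT :: "nat \<Rightarrow> nat \<Rightarrow> fbt set" where
  "FBT d k = {t. left_fathers True t = k \<and> right_fathers True t = d}"

end

theory Submission
  imports Defs
begin

text \<open>Preorder traversal turns a full binary tree into a Dyck word: a father contributes an
up-step before its left subtree and a down-step after it. Fathers correspond to up-steps, and
right fathers to valleys (a right father's up-step follows the down-step of its parent). A Dyck
word with c + d + 1 up-steps and d valleys is a sequence of d + 1 blocks
up^(p_k + 1) down^(q_k + 1); it stays nonnegative iff the partial sums of the q's never exceed
those of the p's, with both totals equal to c. Reading the two rows of a 2 \<times> d decomposition
from right to left gives exactly such a pair of partial-sum sequences, the column condition
being the Dyck condition.\<close>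

text \<open>True is an up-step, False a down-step; the result is None once the path drops below 0.\<close>
fun walk_height :: "nat \<Rightarrow> bool list \<Rightarrow> nat option" where
  "walk_height h [] = Some h"
| "walk_height h (True # w) = walk_height (Suc h) w"
| "walk_height h (False # w) = (if h = 0 then None else walk_height (h - 1) w)"

lemma walk_height_append:
  "walk_height h (u @ w) = (case walk_height h u of None \<Rightarrow> None | Some k \<Rightarrow> walk_height k w)"
  by (induction h u rule: walk_height.induct) auto

lemma walk_height_replicate_up:
  "walk_height h (replicate p True @ w) = walk_height (h + p) w"
  by (induction p arbitrary: h) auto

lemma walk_height_replicate_down:
  "walk_height h (replicate q False @ w) = (if q \<le> h then walk_height (h - q) w else None)"
  by (induction q arbitrary: h) auto

lemma last_up_imp_walk_height_nonzero:
  assumes "w \<noteq> []" and "last w"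
  shows "walk_height h w \<noteq> Some 0"
proof -
  have "walk_height h (u @ [True]) \<noteq> Some 0" for u
    by (simp add: walk_height_append split: option.split)
  with assms show ?thesis
    by (metis append_butlast_last_id)
qed

fun valleys :: "bool list \<Rightarrow> nat" where
  "valleys (False # True # w) = Suc (valleys (True # w))"
| "valleys (x # w) = valleys w"
| "valleys [] = 0"

lemma valleys_down_Cons: "valleys (False # x # w) = (if x then 1 else 0) + valleys (x # w)"
  by (cases x) auto

lemma valleys_append:
  "valleys (u @ w) = valleys u + valleys w + (if u \<noteq> [] \<and> w \<noteq> [] \<and> \<not> last u \<and> hd w then 1 else 0)"
proof (induction u)
  case (Cons x u)
  then show ?case by (cases x; cases u; cases w) (auto simp: valleys_down_Cons)
qed simp

lemma valleys_replicate: "valleys (replicate n x) = 0"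
proof (induction n)
  case (Suc n)
  then show ?case by (cases n; cases x) auto
qed simp


section \<open>Trees and Dyck words\<close>

fun dyck_word :: "fbt \<Rightarrow> bool list" where
  "dyck_word Leaf = []"
| "dyck_word (Node l r) = True # dyck_word l @ False # dyck_word r"

lemma walk_height_dyck_word_append: "walk_height h (dyck_word t @ w) = walk_height h w"
  by (induction t arbitrary: h w) auto

lemma dyck_word_append_down_eq:
  "dyck_word a @ False # x = dyck_word b @ False # y \<Longrightarrow> a = b \<and> x = y"
proof (induction a arbitrary: b x y)
  case Leaf
  then show ?case by (cases b) simp_all
next
  case (Node l r)
  from Node.prems obtain l' r' where b: "b = Node l' r'"
    by (cases b) simp_all
  with Node.prems have
    "dyck_word l @ False # (dyck_word r @ False # x) = dyck_word l' @ False # (dyck_word r' @ False # y)"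
    by simp
  then have "l = l'" and "dyck_word r @ False # x = dyck_word r' @ False # y"
    using Node.IH(1) by blast+
  then show ?case
    using Node.IH(2) b by blast
qed

lemma inj_dyck_word: "inj dyck_word"
  using dyck_word_append_down_eq[of _ "[]" _ "[]"] by (auto intro: injI)

lemma dyck_word_decomposition:
  "walk_height h w = Some 0 \<Longrightarrow>
   \<exists>t ts. length ts = h \<and> w = dyck_word t @ concat (map (\<lambda>s. False # dyck_word s) ts)"
proof (induction w arbitrary: h)
  case Nil
  then show ?case
    by (intro exI[of _ Leaf] exI[of _ "[]"]) simp
next
  case (Cons x w)
  show ?case
  proof (cases x)
    case True
    with Cons.prems have "walk_height (Suc h) w = Some 0"
      by simp
    with Cons.IH obtain t ts where ts: "length ts = Suc h"
      and w: "w = dyck_word t @ concat (map (\<lambda>s. False # dyck_word s) ts)"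
      by blast
    then obtain s ts' where "ts = s # ts'"
      by (cases ts) simp_all
    with ts w True show ?thesis
      by (intro exI[of _ "Node t s"] exI[of _ ts']) simp
  next
    case False
    with Cons.prems obtain h' where h: "h = Suc h'" and "walk_height h' w = Some 0"
      by (cases h) simp_all
    with Cons.IH obtain t ts where "length ts = h'"
      and "w = dyck_word t @ concat (map (\<lambda>s. False # dyck_word s) ts)"
      by blast
    with False h show ?thesis
      by (intro exI[of _ Leaf] exI[of _ "t # ts"]) simp
  qed
qed

lemma walk_height_dyck_word: "walk_height 0 (dyck_word t) = Some 0"
  using walk_height_dyck_word_append[of 0 t "[]"] by simp

lemma dyck_word_surj: "walk_height 0 w = Some 0 \<Longrightarrow> \<exists>t. w = dyck_word t"
  using dyck_word_decomposition[of 0 w] by auto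

lemma count_up_dyck_word: "count_list (dyck_word t) True = left_fathers b t + right_fathers b t"
proof (induction t arbitrary: b)
  case (Node l r)
  show ?case using Node.IH(1)[of True] Node.IH(2)[of False] by simp
qed simp

lemma valleys_dyck_word: "valleys (dyck_word t) = right_fathers True t"
proof (induction t)
  case (Node l r)
  have "right_fathers False r = right_fathers True r + (if r = Leaf then 0 else 1)"
    by (cases r) auto
  moreover have "valleys (dyck_word (Node l r)) =
      valleys (dyck_word l) + valleys (dyck_word r) + (if r = Leaf then 0 else 1)"
    using valleys_append[of "dyck_word l @ [False]" "dyck_word r"]
    by (cases r) (auto simp: valleys_append)
  ultimately show ?case
    using Node.IH by simp
qed simp

definition dyck_words :: "nat \<Rightarrow> nat \<Rightarrow> bool list set" where
  "dyck_words d k = {w. walk_height 0 w = Some 0 \<and> count_list w True = k + d \<and> valleys w = d}"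

lemma bij_betw_dyck_word: "bij_betw dyck_word (FBT d k) (dyck_words d k)"
proof -
  have "dyck_word t \<in> dyck_words d k \<longleftrightarrow> t \<in> FBT d k" for t
    using count_up_dyck_word[of t True] valleys_dyck_word[of t] walk_height_dyck_word[of t]
    by (auto simp: dyck_words_def FBT_def)
  moreover have "dyck_words d k \<subseteq> range dyck_word"
    using dyck_word_surj by (auto simp: dyck_words_def)
  ultimately have "dyck_word ` FBT d k = dyck_words d k"
    by blast
  then show ?thesis
    using inj_on_subset[OF inj_dyck_word subset_UNIV] by (simp add: bij_betw_def)
qed


section \<open>Dyck words as sequences of blocks\<close>

fun block :: "nat \<times> nat \<Rightarrow> bool list" where
  "block (p, q) = replicate (Suc p) True @ replicate (Suc q) False"

definition word_of_blocks :: "(nat \<times> nat) list \<Rightarrow> bool list" where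
  "word_of_blocks bs = concat (map block bs)"

lemma word_of_blocks_Nil [simp]: "word_of_blocks [] = []"
  and word_of_blocks_Cons [simp]: "word_of_blocks (b # bs) = block b @ word_of_blocks bs"
  by (simp_all add: word_of_blocks_def)

lemma word_of_blocks_eq_Nil_iff [simp]: "word_of_blocks bs = [] \<longleftrightarrow> bs = []"
  by (cases bs) auto

lemma word_of_blocks_Nil_or_hd: "word_of_blocks bs = [] \<or> hd (word_of_blocks bs)"
  by (cases bs) auto

lemma replicate_append_eq:
  assumes "replicate p x @ u = replicate p' x @ u'"
    and "u = [] \<or> hd u \<noteq> x" and "u' = [] \<or> hd u' \<noteq> x"
  shows "p = p' \<and> u = u'"
  using assms
proof (induction p arbitrary: p')
  case 0
  then show ?case by (cases p') auto
next
  case (Suc p)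
  then show ?case by (cases p') auto
qed

lemma word_of_blocks_inj: "word_of_blocks bs = word_of_blocks bs' \<Longrightarrow> bs = bs'"
proof (induction bs arbitrary: bs')
  case Nil
  then show ?case
    using word_of_blocks_eq_Nil_iff[of bs'] by simp
next
  case (Cons b bs)
  from Cons.prems have "bs' \<noteq> []"
    using word_of_blocks_eq_Nil_iff[of "b # bs"] by force
  then obtain p q p' q' bs'' where b: "b = (p, q)" and bs': "bs' = (p', q') # bs''"
    by (metis neq_Nil_conv prod.exhaust)
  have "replicate (Suc p) True @ replicate (Suc q) False @ word_of_blocks bs =
        replicate (Suc p') True @ replicate (Suc q') False @ word_of_blocks bs''"
    using Cons.prems by (simp add: b bs')
  then have "Suc p = Suc p' \<and> replicate (Suc q) False @ word_of_blocks bs =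
                              replicate (Suc q') False @ word_of_blocks bs''"
    by (rule replicate_append_eq) simp_all
  moreover have "Suc q = Suc q' \<and> word_of_blocks bs = word_of_blocks bs''"
    using calculation word_of_blocks_Nil_or_hd[of bs] word_of_blocks_Nil_or_hd[of bs'']
    by (intro replicate_append_eq) auto
  ultimately show ?case
    using Cons.IH b bs' by simp
qed

lemma word_of_blocks_decomposition:
  "w = [] \<or> \<not> last w \<Longrightarrow> \<exists>q bs. w = replicate q False @ word_of_blocks bs"
proof (induction w)
  case Nil
  show ?case by (intro exI[of _ 0] exI[of _ "[]"]) simp
next
  case (Cons x w)
  show ?case
  proof (cases x)
    case False
    show ?thesis
    proof (cases "w = []")
      case True
      with False show ?thesis by (intro exI[of _ 1] exI[of _ "[]"]) auto
    next
      case nonempty: False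
      with Cons obtain q bs where "w = replicate q False @ word_of_blocks bs" by auto
      with False show ?thesis by (intro exI[of _ "Suc q"] exI[of _ bs]) auto
    qed
  next
    case True
    with Cons.prems have nonempty: "w \<noteq> []" by auto
    with Cons obtain q bs where w: "w = replicate q False @ word_of_blocks bs" by auto
    show ?thesis
    proof (cases q)
      case (Suc q')
      with w True show ?thesis
        by (intro exI[of _ 0] exI[of _ "(0, q') # bs"]) auto
    next
      case 0
      with w nonempty obtain p q1 bs' where "bs = (p, q1) # bs'"
        by (cases bs) fastforce+
      with w True 0 show ?thesis
        by (intro exI[of _ 0] exI[of _ "(Suc p, q1) # bs'"]) auto
    qed
  qed
qed

lemma count_list_replicate_same: "count_list (replicate n x) x = n"
  by (induction n) auto

lemma count_up_word_of_blocks: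
  "count_list (word_of_blocks bs) True = length bs + sum_list (map fst bs)"
  by (induction bs) (auto simp: count_list_replicate_same)

lemma valleys_word_of_blocks: "valleys (word_of_blocks bs) = length bs - 1"
proof (induction bs)
  case (Cons b bs)
  obtain p q where b: "b = (p, q)" by fastforce
  have "valleys (block b) = 0"
    by (simp add: b valleys_append valleys_replicate del: replicate_Suc)
  moreover have "block b \<noteq> []" and "\<not> last (block b)"
    by (simp_all add: b)
  ultimately have
    "valleys (word_of_blocks (b # bs)) = valleys (word_of_blocks bs) + (if bs = [] then 0 else 1)"
    using word_of_blocks_Nil_or_hd[of bs] valleys_append[of "block b"] by auto
  then show ?case
    using Cons.IH by (cases bs) auto
qed simp

text \<open>Within a block the lowest point is its end, so the path only has to be checked after
each block.\<close>
lemma walk_height_word_of_blocks: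
  "walk_height h (word_of_blocks bs) = Some h' \<longleftrightarrow>
   (\<forall>m. sum_list (take m (map snd bs)) \<le> h + sum_list (take m (map fst bs))) \<and>
   h' + sum_list (map snd bs) = h + sum_list (map fst bs)"
proof (induction bs arbitrary: h)
  case (Cons b bs)
  obtain p q where b: "b = (p, q)" by fastforce
  have split: "(\<forall>m. P m) \<longleftrightarrow> P 0 \<and> (\<forall>m. P (Suc m))" for P :: "nat \<Rightarrow> bool"
    by (metis not0_implies_Suc)
  show ?case
  proof (cases "q \<le> h + p")
    case True
    have "y \<le> h + p + x - q \<longleftrightarrow> q + y \<le> h + (p + x)"
      and "h' + y = h + p + x - q \<longleftrightarrow> h' + (q + y) = h + (p + x)" for x y
      using True by arith+
    with True show ?thesis
      using Cons.IH[of "h + p - q"]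
      by (subst split) (auto simp: b walk_height_replicate_up walk_height_replicate_down
          simp del: replicate_Suc)
  next
    case False
    have "\<not> (\<forall>m. sum_list (take m (map snd (b # bs))) \<le> h + sum_list (take m (map fst (b # bs))))"
    proof
      assume "\<forall>m. sum_list (take m (map snd (b # bs))) \<le> h + sum_list (take m (map fst (b # bs)))"
      from this[rule_format, of 1] False show False
        by (simp add: b)
    qed
    with False show ?thesis
      by (simp add: b walk_height_replicate_up walk_height_replicate_down del: replicate_Suc)
  qed
qed auto

definition ballot_blocks :: "nat \<Rightarrow> nat \<Rightarrow> (nat \<times> nat) list set" where
  "ballot_blocks d c = {bs. length bs = Suc d \<and>
     sum_list (map fst bs) = c \<and> sum_list (map snd bs) = c \<and>
     (\<forall>m. sum_list (take m (map snd bs)) \<le> sum_list (take m (map fst bs)))}"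

lemma bij_betw_word_of_blocks: "bij_betw word_of_blocks (ballot_blocks d c) (dyck_words d (c + 1))"
proof -
  have "word_of_blocks bs \<in> dyck_words d (c + 1) \<longleftrightarrow> bs \<in> ballot_blocks d c" for bs
  proof -
    have "length bs - 1 = d \<and> length bs + sum_list (map fst bs) = c + 1 + d \<longleftrightarrow>
          length bs = Suc d \<and> sum_list (map fst bs) = c"
      by (cases bs) auto
    then show ?thesis
      using walk_height_word_of_blocks[of 0 bs 0]
      by (auto simp: dyck_words_def ballot_blocks_def count_up_word_of_blocks valleys_word_of_blocks)
  qed
  moreover have "w \<in> range word_of_blocks" if w: "w \<in> dyck_words d (c + 1)" for w
  proof -
    have "w \<noteq> []"
      using w by (auto simp: dyck_words_def)
    with w have "\<not> last w"
      using last_up_imp_walk_height_nonzero by (auto simp: dyck_words_def)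
    then obtain q bs where w_eq: "w = replicate q False @ word_of_blocks bs"
      using word_of_blocks_decomposition by blast
    with w have "q = 0"
      by (cases q) (auto simp: dyck_words_def)
    with w_eq show ?thesis by simp
  qed
  ultimately have "word_of_blocks ` ballot_blocks d c = dyck_words d (c + 1)"
    by blast
  then show ?thesis
    using word_of_blocks_inj by (simp add: bij_betw_def inj_on_def)
qed


section \<open>Partial sums and two-rowed plane partitions\<close>

lemma sum_list_take_mono: "m \<le> n \<Longrightarrow> sum_list (take m xs) \<le> sum_list (take n (xs :: nat list))"
  by (metis le_add1 le_add_diff_inverse sum_list_append take_add)

lemma sum_list_take_le: "sum_list (take m xs) \<le> sum_list (xs :: nat list)"
  by (metis sum_list_take_mono nat_le_linear take_all)

lemma eq_if_prefix_sums_eq: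
  assumes "length xs = length ys"
    and "\<And>m. sum_list (take m xs) = sum_list (take m (ys :: nat list))"
  shows "xs = ys"
proof (rule nth_equalityI)
  fix k assume "k < length xs"
  then show "xs ! k = ys ! k"
    using assms(2)[of k] assms(2)[of "Suc k"] assms(1) by (simp add: take_Suc_conv_app_nth)
qed fact

lemma exists_list_prefix_sums:
  fixes f :: "nat \<Rightarrow> nat"
  assumes "f 0 = 0" and mono: "\<And>k. f k \<le> f (Suc k)"
  shows "\<exists>xs. length xs = n \<and> (\<forall>m. sum_list (take m xs) = f (min m n))"
proof -
  have telescope: "sum_list (map (\<lambda>k. f (Suc k) - f k) [0..<m]) = f m" for m
  proof (induction m)
    case (Suc m)
    then show ?case using mono[of m] by simp
  qed (simp add: assms(1))
  have "take m [0..<n] = [0..<min m n]" for m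
    by (cases "m \<le> n") (simp_all add: take_upt min_def)
  then show ?thesis
    by (intro exI[of _ "map (\<lambda>k. f (Suc k) - f k) [0..<n]"]) (simp add: take_map telescope)
qed

text \<open>Entry (i, j) is the i-th coordinate summed over the first d - j blocks; the d + 1-st block
only fixes the totals.\<close>
definition matrix_of_blocks :: "nat \<Rightarrow> (nat \<times> nat) list \<Rightarrow> nat \<Rightarrow> nat \<Rightarrow> nat" where
  "matrix_of_blocks d bs i j =
     (if j < d \<and> i = 0 then sum_list (take (d - j) (map fst bs))
      else if j < d \<and> i = 1 then sum_list (take (d - j) (map snd bs)) else 0)"

lemma mem_R_iff:
  "M \<in> R d c \<longleftrightarrow>
     (\<forall>i j. \<not> (i < 2 \<and> j < d) \<longrightarrow> M i j = 0) \<and> (\<forall>i<2. \<forall>j<d. M i j \<le> c) \<and>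
     (\<forall>i<2. \<forall>j. Suc j < d \<longrightarrow> M i (Suc j) \<le> M i j) \<and> (\<forall>j<d. M 1 j \<le> M 0 j)"
proof -
  have "(\<forall>i j. Suc i < 2 \<longrightarrow> j < d \<longrightarrow> M (Suc i) j \<le> M i j) \<longleftrightarrow> (\<forall>j<d. M 1 j \<le> M 0 j)"
    by (simp add: less_2_cases_iff)
  then show ?thesis
    unfolding R_def two_dim_decomp_def by blast
qed

lemma matrix_of_blocks_in_R:
  assumes "bs \<in> ballot_blocks d c"
  shows "matrix_of_blocks d bs \<in> R d c"
proof -
  from assms have sums: "sum_list (map fst bs) = c" "sum_list (map snd bs) = c"
    and ballot: "\<And>m. sum_list (take m (map snd bs)) \<le> sum_list (take m (map fst bs))"
    by (auto simp: ballot_blocks_def)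
  let ?M = "matrix_of_blocks d bs"
  have "?M i j = 0" if "\<not> (i < 2 \<and> j < d)" for i j
    using that by (auto simp: matrix_of_blocks_def)
  moreover have "?M i j \<le> c" for i j
    using sum_list_take_le[of _ "map fst bs"] sum_list_take_le[of _ "map snd bs"] sums
    by (simp add: matrix_of_blocks_def)
  moreover have "?M i (Suc j) \<le> ?M i j" for i j
    using sum_list_take_mono[of "d - Suc j" "d - j"] by (simp add: matrix_of_blocks_def)
  moreover have "?M 1 j \<le> ?M 0 j" for j
    using ballot by (simp add: matrix_of_blocks_def)
  ultimately show ?thesis
    unfolding mem_R_iff by blast
qed

lemma matrix_of_blocks_inj: "inj_on (matrix_of_blocks d) (ballot_blocks d c)"
proof (rule inj_onI)
  fix bs bs' assume bs: "bs \<in> ballot_blocks d c" and bs': "bs' \<in> ballot_blocks d c"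
    and eq: "matrix_of_blocks d bs = matrix_of_blocks d bs'"
  have "sum_list (take m (map f bs)) = sum_list (take m (map f bs'))"
    if f: "f = fst \<or> f = snd" for f and m
  proof (cases "m = 0 \<or> d < m")
    case True
    with bs bs' f show ?thesis by (auto simp: ballot_blocks_def)
  next
    case False
    then have "d - (d - m) = m" and "d - m < d" by auto
    with f show ?thesis
      using fun_cong[OF fun_cong[OF eq, of 0], of "d - m"]
        fun_cong[OF fun_cong[OF eq, of 1], of "d - m"]
      by (auto simp: matrix_of_blocks_def)
  qed
  with bs bs' have "map fst bs = map fst bs'" and "map snd bs = map snd bs'"
    by (auto intro!: eq_if_prefix_sums_eq simp: ballot_blocks_def)
  then show "bs = bs'"
    by (rule pair_list_eqI)
qed

lemma matrix_of_blocks_surj: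
  assumes "M \<in> R d c"
  shows "\<exists>bs \<in> ballot_blocks d c. matrix_of_blocks d bs = M"
proof -
  note M = assms[unfolded mem_R_iff]
  \<comment> \<open>row i m is to become the sum of the i-th coordinates of the first m blocks\<close>
  define row where "row i m = (if m = 0 then 0 else if m \<le> d then M i (d - m) else c)" for i m
  have row_mono: "row i k \<le> row i (Suc k)" if "i < 2" for i k
  proof -
    consider "k = 0" | "0 < k" "Suc k \<le> d" | "k = d" | "d < k"
      by linarith
    then show ?thesis
    proof cases
      case 2
      then have "d - k = Suc (d - Suc k)" by simp
      with 2 M that show ?thesis by (simp add: row_def)
    next
      case 3
      with M that show ?thesis by (simp add: row_def)
    qed (auto simp: row_def)
  qed
  have row_0: "row i 0 = 0" for i
    by (simp add: row_def)
  obtain xs where xs: "length xs = Suc d" "\<And>m. sum_list (take m xs) = row 0 (min m (Suc d))"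
    using exists_list_prefix_sums[of "row 0" "Suc d"] row_0 row_mono[of 0] by auto
  obtain ys where ys: "length ys = Suc d" "\<And>m. sum_list (take m ys) = row 1 (min m (Suc d))"
    using exists_list_prefix_sums[of "row 1" "Suc d"] row_0 row_mono[of 1] by auto
  define bs where "bs = zip xs ys"
  have fst_bs: "map fst bs = xs" and snd_bs: "map snd bs = ys"
    using xs ys by (simp_all add: bs_def)
  have "sum_list xs = c" and "sum_list ys = c"
    using xs(2)[of "Suc d"] ys(2)[of "Suc d"] by (simp_all add: xs(1) ys(1) row_def)
  moreover have "sum_list (take m ys) \<le> sum_list (take m xs)" for m
    using M by (simp add: xs(2) ys(2) row_def)
  ultimately have "bs \<in> ballot_blocks d c"
    using xs(1) ys(1) by (simp add: ballot_blocks_def fst_bs snd_bs bs_def)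
  moreover have "matrix_of_blocks d bs = M"
  proof (intro ext)
    fix i j
    show "matrix_of_blocks d bs i j = M i j"
      using M xs(2)[of "d - j"] ys(2)[of "d - j"]
      by (auto simp: matrix_of_blocks_def fst_bs snd_bs row_def)
  qed
  ultimately show ?thesis by blast
qed

lemma bij_betw_matrix_of_blocks: "bij_betw (matrix_of_blocks d) (ballot_blocks d c) (R d c)"
proof -
  have "matrix_of_blocks d ` ballot_blocks d c = R d c"
    using matrix_of_blocks_in_R matrix_of_blocks_surj by blast
  then show ?thesis
    using matrix_of_blocks_inj by (simp add: bij_betw_def)
qed

theorem theorem2p1:
  fixes d c :: nat
  assumes "d \<ge> 1"
  shows "\<exists>f. bij_betw f (R d c) (FBT d (c + 1))"
proof -
  have "bij_betw (word_of_blocks \<circ> inv_into (ballot_blocks d c) (matrix_of_blocks d))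
          (R d c) (dyck_words d (c + 1))"
    using bij_betw_inv_into[OF bij_betw_matrix_of_blocks] bij_betw_word_of_blocks
    by (rule bij_betw_trans)
  from bij_betw_trans[OF this bij_betw_inv_into[OF bij_betw_dyck_word]] show ?thesis
    by blast
qed

end
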